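(* Let $A$ be a commutative unital Banach algebra with unit $1_A$, let $x,y\in A$ be quasinilpotent, and let $\lambda\in\mathbb{C}$. (i) If $\lambda\notin\pi\mathbb{Z}$ and $\cos(\lambda 1_A+x)=\cos(\lambda 1_A+y)$, then $x=y$. (ii) If $\lambda\in\pi\mathbb{Z}$ and $\cos(\lambda 1_A+x)=\cos(\lambda 1_A+y)$, then $x^2=y^2$.
   Context: For $z\in A$, $\cos(z)=\sum_{n=0}^\infty(-1)^n\frac{z^{2n}}{(2n)!}$. An element $x$ is quasinilpotent if $\lim_{n\to\infty}\Vert x^n\Vert^{1/n}=0$. *)

theory Defs
  imports "HOL-Analysis.Analysis"
begin

text \<open>The distribution
  has no complex-vector-space type class, so we extend the real commutative unital
  Banach algebra classes by a complex scalar multiplication compatible with the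
  real one and with the norm and multiplication.\<close>

class comm_cbanach_algebra_1 = banach + real_normed_algebra_1 + comm_ring_1 +
  fixes scaleC :: "complex \<Rightarrow> 'a \<Rightarrow> 'a"
  assumes scaleC_of_real: "scaleC (complex_of_real r) x = scaleR r x"
    and scaleC_add_right: "scaleC a (x + y) = scaleC a x + scaleC a y"
    and scaleC_add_left: "scaleC (a + b) x = scaleC a x + scaleC b x"
    and scaleC_scaleC: "scaleC a (scaleC b x) = scaleC (a * b) x"
    and scaleC_one: "scaleC 1 x = x"
    and norm_scaleC: "norm (scaleC a x) = cmod a * norm x"
    and scaleC_left_mult: "scaleC a x * y = scaleC a (x * y)"

definition quasinilpotent :: "'a::real_normed_algebra_1 \<Rightarrow> bool" where
  "quasinilpotent x \<longleftrightarrow> (\<lambda>n. norm (x ^ n) powr (1 / real n)) \<longlonglongrightarrow> 0"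

end

theory Submission
  imports Defs
begin

text \<open>Write \<open>I = i 1\<close>, \<open>X = exp (I x)\<close>, \<open>Y = exp (I y)\<close> and \<open>c = e\<^sup>i\<^sup>\<lambda>\<close>.  Since
  \<open>2 cos (\<lambda> + x) = c X + c\<^sup>-\<^sup>1 X\<^sup>-\<^sup>1\<close>, the hypothesis gives \<open>(X - Y) (c\<^sup>2 X Y - 1) = 0\<close>.
  Quasinilpotent elements are closed under sums and multiples, and \<open>1 + q\<close> is invertible for
  quasinilpotent \<open>q\<close>; hence \<open>exp q - 1\<close> is \<open>q\<close> times a unit, so \<open>X - Y\<close> is \<open>x - y\<close> times a unit
  and \<open>X Y - 1\<close> is \<open>x + y\<close> times a unit.  If \<open>c\<^sup>2 \<noteq> 1\<close>, i.e. \<open>\<lambda> \<notin> \<pi>\<int>\<close>, then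
  \<open>c\<^sup>2 X Y - 1 = (c\<^sup>2 - 1) + c\<^sup>2 (X Y - 1)\<close> is a unit as well and \<open>x = y\<close>; if \<open>c\<^sup>2 = 1\<close>, then
  \<open>(x - y) (x + y) = 0\<close>.\<close>

lemma mult_unit_eq_0_iff:
  fixes a u :: "'a::comm_semiring_1"
  assumes "u dvd 1"
  shows "a * u = 0 \<longleftrightarrow> a = 0"
proof
  assume "a * u = 0"
  from assms obtain k where "1 = u * k" by (rule dvdE)
  then have "a = a * u * k" by (simp add: mult.assoc)
  with \<open>a * u = 0\<close> show "a = 0" by simp
qed simp

lemma unit_mult:
  fixes a b :: "'a::comm_semiring_1"
  shows "a dvd 1 \<Longrightarrow> b dvd 1 \<Longrightarrow> a * b dvd 1"
  using mult_dvd_mono[of a 1 b 1] by simp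

lemma sum_reciprocals_eq_imp:
  fixes c c' x x' y y' :: "'a::comm_ring_1"
  assumes "c * c' = 1" "x * x' = 1" "y * y' = 1" "c * x + c' * x' = c * y + c' * y'"
  shows "(x - y) * (c * c * x * y - 1) = 0"
proof -
  have "(x - y) * (c * c * x * y - 1) = c * x * y * (c * x + c' * x') - c * x * y * (c * y + c' * y')
      - x + y - (c * c') * (x * x') * y + (c * c') * x * (y * y')"
    by (simp add: algebra_simps)
  also have "\<dots> = 0" using assms by simp
  finally show ?thesis .
qed

text \<open>Quasinilpotence in bound form; unlike the root form, it is visibly closed under sums
  by the binomial theorem.\<close>

definition subgeometric :: "'a::real_normed_algebra_1 \<Rightarrow> bool" where
  "subgeometric q \<longleftrightarrow> (\<forall>e>0. \<exists>M. \<forall>n. norm (q ^ n) \<le> M * e ^ n)"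

lemma quasinilpotent_imp_subgeometric:
  fixes q :: "'a::real_normed_algebra_1"
  assumes "quasinilpotent q"
  shows "subgeometric q"
  unfolding subgeometric_def
proof (intro allI impI)
  fix e :: real
  assume e: "e > 0"
  have "eventually (\<lambda>n. norm (q ^ n) powr (1 / real n) < e) sequentially"
    using assms e unfolding quasinilpotent_def by (intro order_tendstoD) auto
  then obtain N where N: "\<And>n. n \<ge> N \<Longrightarrow> norm (q ^ n) powr (1 / real n) < e"
    unfolding eventually_sequentially by blast
  define N' where "N' = max N 1"
  have tail: "norm (q ^ n) \<le> e ^ n" if "n \<ge> N'" for n
  proof (cases "q ^ n = 0")
    case False
    have n: "n \<ge> 1" "n \<ge> N" using that by (auto simp: N'_def)
    have "norm (q ^ n) = (norm (q ^ n) powr (1 / real n)) ^ n"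
      using False n by (simp add: powr_powr flip: powr_realpow)
    also have "\<dots> \<le> e ^ n"
      using N[OF n(2)] by (intro power_mono) auto
    finally show ?thesis .
  qed (use e in simp)
  define M where "M = (\<Sum>k<N'. norm (q ^ k) / e ^ k) + 1"
  have "M \<ge> 1" unfolding M_def using e by (simp add: sum_nonneg)
  have "norm (q ^ n) \<le> M * e ^ n" for n
  proof (cases "n < N'")
    case True
    have "norm (q ^ n) / e ^ n \<le> (\<Sum>k<N'. norm (q ^ k) / e ^ k)"
      using True e by (intro member_le_sum) auto
    also have "\<dots> \<le> M" unfolding M_def by simp
    finally show ?thesis using e by (simp add: divide_le_eq)
  next
    case False
    then have "norm (q ^ n) \<le> e ^ n" using tail by simp
    also have "\<dots> \<le> M * e ^ n" using \<open>M \<ge> 1\<close> e by simp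
    finally show ?thesis .
  qed
  then show "\<exists>M. \<forall>n. norm (q ^ n) \<le> M * e ^ n" by blast
qed

lemma subgeometric_add:
  fixes a b :: "'a::{real_normed_algebra_1, comm_ring_1}"
  assumes "subgeometric a" "subgeometric b"
  shows "subgeometric (a + b)"
  unfolding subgeometric_def
proof (intro allI impI)
  fix e :: real
  assume e: "e > 0"
  obtain Ma where Ma: "\<And>n. norm (a ^ n) \<le> Ma * (e / 2) ^ n"
    using assms(1) e unfolding subgeometric_def by (meson half_gt_zero)
  obtain Mb where Mb: "\<And>n. norm (b ^ n) \<le> Mb * (e / 2) ^ n"
    using assms(2) e unfolding subgeometric_def by (meson half_gt_zero)
  have "Ma \<ge> 0" "Mb \<ge> 0" using Ma[of 0] Mb[of 0] by simp_all
  have "norm ((a + b) ^ n) \<le> Ma * Mb * e ^ n" for n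
  proof -
    have "norm ((a + b) ^ n) \<le> (\<Sum>k\<le>n. norm (of_nat (n choose k) * a ^ k * b ^ (n - k)))"
      unfolding binomial_ring by (rule norm_sum)
    also have "\<dots> \<le> (\<Sum>k\<le>n. real (n choose k) * (Ma * (e / 2) ^ k) * (Mb * (e / 2) ^ (n - k)))"
    proof (intro sum_mono)
      fix k
      have "norm (of_nat (n choose k) * a ^ k * b ^ (n - k))
          \<le> real (n choose k) * norm (a ^ k) * norm (b ^ (n - k))"
        by (intro order_trans[OF norm_mult_ineq] mult_right_mono)
           (auto intro: order_trans[OF norm_mult_ineq] simp: norm_of_nat)
      also have "\<dots> \<le> real (n choose k) * (Ma * (e / 2) ^ k) * (Mb * (e / 2) ^ (n - k))"
        using Ma Mb \<open>Ma \<ge> 0\<close> e by (intro mult_mono mult_left_mono) auto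
      finally show "norm (of_nat (n choose k) * a ^ k * b ^ (n - k))
          \<le> real (n choose k) * (Ma * (e / 2) ^ k) * (Mb * (e / 2) ^ (n - k))" .
    qed
    also have "\<dots> = Ma * Mb * (e / 2 + e / 2) ^ n"
      unfolding binomial_ring by (simp add: sum_distrib_left algebra_simps)
    finally show ?thesis by simp
  qed
  then show "\<exists>M. \<forall>n. norm ((a + b) ^ n) \<le> M * e ^ n" by blast
qed

lemma subgeometric_mult_left:
  fixes q z :: "'a::{real_normed_algebra_1, comm_ring_1}"
  assumes "subgeometric q"
  shows "subgeometric (z * q)"
  unfolding subgeometric_def
proof (intro allI impI)
  fix e :: real
  assume e: "e > 0"
  have "norm z + 1 > 0" by (simp add: add_nonneg_pos)
  define e' where "e' = e / (norm z + 1)"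
  have "e' > 0" unfolding e'_def using e \<open>norm z + 1 > 0\<close> by simp
  then obtain M where M: "\<And>n. norm (q ^ n) \<le> M * e' ^ n"
    using assms unfolding subgeometric_def by blast
  have "M \<ge> 0" using M[of 0] by simp
  have "norm z * e' \<le> (norm z + 1) * e'" using \<open>e' > 0\<close> by simp
  also have "\<dots> = e" unfolding e'_def using \<open>norm z + 1 > 0\<close> by simp
  finally have "norm z * e' \<le> e" .
  have "norm ((z * q) ^ n) \<le> M * e ^ n" for n
  proof -
    have "norm ((z * q) ^ n) \<le> norm (z ^ n) * norm (q ^ n)"
      unfolding power_mult_distrib by (rule norm_mult_ineq)
    also have "\<dots> \<le> norm z ^ n * (M * e' ^ n)"
      using M by (intro mult_mono norm_power_ineq) auto
    also have "\<dots> = M * (norm z * e') ^ n" by (simp add: power_mult_distrib)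
    also have "\<dots> \<le> M * e ^ n"
      using \<open>norm z * e' \<le> e\<close> \<open>e' > 0\<close> \<open>M \<ge> 0\<close> by (intro mult_left_mono power_mono) auto
    finally show ?thesis .
  qed
  then show "\<exists>M. \<forall>n. norm ((z * q) ^ n) \<le> M * e ^ n" by blast
qed

lemma subgeometric_diff:
  fixes a b :: "'a::{real_normed_algebra_1, comm_ring_1}"
  assumes "subgeometric a" "subgeometric b"
  shows "subgeometric (a - b)"
  using subgeometric_add[OF assms(1) subgeometric_mult_left[OF assms(2), of "- 1"]] by simp

lemma subgeometric_imp_one_plus_unit:
  fixes q :: "'a::{real_normed_algebra_1, comm_ring_1, banach}"
  assumes "subgeometric q"
  shows "1 + q dvd 1"
proof -
  obtain M where M: "\<And>n. norm (q ^ n) \<le> M * (1 / 2) ^ n"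
    using assms unfolding subgeometric_def by (meson zero_less_divide_1_iff zero_less_numeral)
  define p where "p = - q"
  have bound: "norm (p ^ n) \<le> M * (1 / 2) ^ n" for n
    using M[of n] unfolding p_def by (cases "even n") simp_all
  have "summable (\<lambda>n. M * (1 / 2 :: real) ^ n)"
    by (intro summable_mult complete_algebra_summable_geometric) simp
  then have summable: "summable (\<lambda>n. p ^ n)"
    by (rule summable_comparison_test') (rule bound)
  have "(\<lambda>n. M * (1 / 2 :: real) ^ n) \<longlonglongrightarrow> 0"
    by (intro tendsto_mult_right_zero LIMSEQ_power_zero) simp
  then have "(\<lambda>n. p ^ n) \<longlonglongrightarrow> 0"
    by (rule Lim_null_comparison[OF always_eventually, rotated]) (use bound in auto)
  then have "(\<lambda>n. p ^ n - p ^ Suc n) sums 1"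
    using telescope_sums'[of "\<lambda>n. p ^ n" 0] by simp
  moreover have "(\<lambda>n. (1 - p) * p ^ n) sums ((1 - p) * (\<Sum>n. p ^ n))"
    using summable by (intro bounded_linear.sums[OF bounded_linear_mult_right] summable_sums)
  moreover have "(\<lambda>n. (1 - p) * p ^ n) = (\<lambda>n. p ^ n - p ^ Suc n)"
    by (simp add: algebra_simps)
  ultimately have "1 = (1 - p) * (\<Sum>n. p ^ n)"
    using sums_unique2 by metis
  then have "1 = (1 + q) * (\<Sum>n. p ^ n)"
    by (simp add: p_def)
  then show ?thesis ..
qed

definition exp_tail :: "nat \<Rightarrow> 'a \<Rightarrow> 'a::{real_normed_algebra_1, banach}" where
  "exp_tail k u = (\<Sum>n. u ^ n /\<^sub>R fact (n + k))"

lemma exp_tail_0: "exp_tail 0 u = exp u"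
  by (simp add: exp_tail_def exp_def)

lemma summable_exp_tail: "summable (\<lambda>n. u ^ n /\<^sub>R fact (n + k))"
  for u :: "'a::{real_normed_algebra_1, banach}"
proof (rule summable_comparison_test'[OF summable_norm_exp])
  fix n
  have "inverse (fact (n + k)) \<le> (inverse (fact n) :: real)"
    by (intro le_imp_inverse_le fact_mono) simp_all
  then show "norm (u ^ n /\<^sub>R fact (n + k)) \<le> norm (u ^ n /\<^sub>R fact n)"
    by (simp add: mult_right_mono)
qed

lemma exp_tail_Suc: "exp_tail k u = 1 /\<^sub>R fact k + u * exp_tail (Suc k) u"
  for u :: "'a::{real_normed_algebra_1, banach}"
proof -
  have "(\<lambda>n. u * (u ^ n /\<^sub>R fact (n + Suc k))) sums (u * exp_tail (Suc k) u)"
    unfolding exp_tail_def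
    by (intro bounded_linear.sums[OF bounded_linear_mult_right] summable_sums summable_exp_tail)
  then have "(\<lambda>n. u ^ Suc n /\<^sub>R fact (Suc n + k)) sums (u * exp_tail (Suc k) u)"
    by (simp add: mult_scaleR_right)
  then have "(\<lambda>n. u ^ n /\<^sub>R fact (n + k)) sums (u * exp_tail (Suc k) u + 1 /\<^sub>R fact k)"
    by (subst (asm) sums_Suc_iff) simp
  then show ?thesis
    unfolding exp_tail_def by (simp add: sums_iff add.commute)
qed

lemma subgeometric_exp_minus_one:
  fixes u :: "'a::{real_normed_algebra_1, comm_ring_1, banach}"
  assumes "subgeometric u"
  obtains g where "exp u - 1 = u * g" "g dvd 1"
proof
  show "exp u - 1 = u * exp_tail 1 u"
    using exp_tail_Suc[of 0 u] by (simp add: exp_tail_0)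
  have "exp_tail 1 u = 1 + exp_tail 2 u * u"
    using exp_tail_Suc[of 1 u] by (simp add: mult.commute numeral_2_eq_2)
  then show "exp_tail 1 u dvd 1"
    using subgeometric_imp_one_plus_unit[OF subgeometric_mult_left[OF assms]] by simp
qed

lemma subgeometric_exp_diff:
  fixes a b :: "'a::{real_normed_algebra_1, comm_ring_1, banach}"
  assumes "subgeometric (a - b)"
  obtains g where "exp a - exp b = (a - b) * g" "g dvd 1"
proof -
  obtain g where g: "exp (a - b) - 1 = (a - b) * g" "g dvd 1"
    using subgeometric_exp_minus_one[OF assms] .
  have "exp a = exp b * exp (a - b)"
    by (simp flip: exp_add_commuting[OF mult.commute])
  then have "exp a - exp b = exp b * (exp (a - b) - 1)"
    by (simp add: algebra_simps)
  also have "\<dots> = (a - b) * (g * exp b)"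
    using g(1) by (simp add: ac_simps)
  finally have "exp a - exp b = (a - b) * (g * exp b)" .
  moreover have "exp b dvd 1"
    using exp_minus_inverse[of b] by (metis dvdI)
  ultimately show thesis
    using that g(2) unit_mult by blast
qed

definition of_complex :: "complex \<Rightarrow> 'a::comm_cbanach_algebra_1" where
  "of_complex c = scaleC c 1"

lemma of_complex_mult: "of_complex (c * d) = (of_complex c * of_complex d :: 'a::comm_cbanach_algebra_1)"
  unfolding of_complex_def by (simp add: scaleC_left_mult scaleC_scaleC)

lemma of_complex_1 [simp]: "of_complex 1 = (1 :: 'a::comm_cbanach_algebra_1)"
  unfolding of_complex_def by (simp add: scaleC_one)

lemma of_complex_of_real: "of_complex (of_real r) = (of_real r :: 'a::comm_cbanach_algebra_1)"
  unfolding of_complex_def scaleC_of_real by (simp add: of_real_def)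

lemma bounded_linear_of_complex: "bounded_linear (of_complex :: complex \<Rightarrow> 'a::comm_cbanach_algebra_1)"
proof (rule bounded_linear_intro[where K = "norm (1::'a)"])
  show "norm (of_complex c :: 'a) \<le> norm c * norm (1::'a)" for c
    unfolding of_complex_def by (simp add: norm_scaleC)
  show "of_complex (c + d) = (of_complex c + of_complex d :: 'a)" for c d
    unfolding of_complex_def by (simp add: scaleC_add_left)
  show "of_complex (r *\<^sub>R c) = (r *\<^sub>R of_complex c :: 'a)" for r c
    by (simp add: scaleR_conv_of_real of_complex_mult of_complex_of_real)
qed

lemmas of_complex_add = linear_add[OF bounded_linear.linear[OF bounded_linear_of_complex]]
lemmas of_complex_diff = linear_diff[OF bounded_linear.linear[OF bounded_linear_of_complex]]
lemmas of_complex_minus = linear_neg[OF bounded_linear.linear[OF bounded_linear_of_complex]]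
lemmas of_complex_scaleR = linear_scale[OF bounded_linear.linear[OF bounded_linear_of_complex]]

lemma of_complex_power: "of_complex (c ^ n) = (of_complex c ^ n :: 'a::comm_cbanach_algebra_1)"
  by (induction n) (simp_all add: of_complex_mult)

lemma of_complex_unit: "c \<noteq> 0 \<Longrightarrow> (of_complex c :: 'a::comm_cbanach_algebra_1) dvd 1"
  by (rule dvdI[of _ _ "of_complex (inverse c)"]) (simp flip: of_complex_mult)

lemma exp_of_complex: "exp (of_complex c) = (of_complex (exp c) :: 'a::comm_cbanach_algebra_1)"
proof -
  have "(\<lambda>n. of_complex (c ^ n /\<^sub>R fact n) :: 'a) sums of_complex (exp c)"
    by (rule bounded_linear.sums[OF bounded_linear_of_complex exp_converges])
  then have "(\<lambda>n. of_complex c ^ n /\<^sub>R fact n :: 'a) sums of_complex (exp c)"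
    by (simp add: of_complex_scaleR of_complex_power)
  then show ?thesis
    using exp_converges sums_unique2 by metis
qed

lemma cos_coeff_eq_i_powers:
  "(\<i> ^ n + (- \<i>) ^ n) / of_real (fact n) = complex_of_real (2 * cos_coeff n)"
proof (cases "even n")
  case True
  then obtain m where m: "n = 2 * m" by (auto elim: evenE)
  have "\<i> ^ n = (- 1) ^ m" "(- \<i>) ^ n = (- 1) ^ m" unfolding m by (simp_all add: power_mult)
  then show ?thesis using True by (simp add: cos_coeff_def m)
qed (simp add: cos_coeff_def)

lemma cos_conv_exp:
  fixes z :: "'a::comm_cbanach_algebra_1"
  shows "2 * cos z = exp (of_complex \<i> * z) + exp (of_complex (- \<i>) * z)"
proof -
  have "(\<lambda>n. (of_complex \<i> * z) ^ n /\<^sub>R fact n + (of_complex (- \<i>) * z) ^ n /\<^sub>R fact n) sums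
        (exp (of_complex \<i> * z) + exp (of_complex (- \<i>) * z))"
    by (intro sums_add exp_converges)
  moreover have "(of_complex \<i> * z) ^ n /\<^sub>R fact n + (of_complex (- \<i>) * z) ^ n /\<^sub>R fact n
      = 2 * (cos_coeff n *\<^sub>R z ^ n)" for n
  proof -
    have "(of_complex \<i> * z) ^ n /\<^sub>R fact n + (of_complex (- \<i>) * z) ^ n /\<^sub>R fact n
        = of_complex ((\<i> ^ n + (- \<i>) ^ n) / of_real (fact n)) * z ^ n"
      by (simp add: power_mult_distrib of_complex_power scaleR_conv_of_real
          of_complex_of_real [symmetric] of_complex_mult of_complex_add divide_inverse algebra_simps
          flip: of_real_inverse)
        (simp add: of_real_inverse mult.commute)
    also have "\<dots> = 2 * (cos_coeff n *\<^sub>R z ^ n)"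
      unfolding cos_coeff_eq_i_powers of_complex_of_real by (simp add: scaleR_conv_of_real)
    finally show ?thesis .
  qed
  moreover have "(\<lambda>n. 2 * (cos_coeff n *\<^sub>R z ^ n)) sums (2 * cos z)"
    by (intro sums_mult cos_converges)
  ultimately show ?thesis
    using sums_unique2 by fastforce
qed

lemma exp_two_i_eq_1_iff:
  "exp (2 * \<i> * l) = 1 \<longleftrightarrow> (\<exists>k::int. l = of_int k * complex_of_real pi)"
proof
  assume "exp (2 * \<i> * l) = 1"
  then obtain n :: int where "Re (2 * \<i> * l) = 0" "Im (2 * \<i> * l) = of_int (2 * n) * pi"
    unfolding exp_eq_1 by blast
  then have "l = of_int n * complex_of_real pi" by (simp add: complex_eq_iff)
  then show "\<exists>k::int. l = of_int k * complex_of_real pi" ..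
next
  assume "\<exists>k::int. l = of_int k * complex_of_real pi"
  then obtain k :: int where "l = of_int k * complex_of_real pi" ..
  then show "exp (2 * \<i> * l) = 1" unfolding exp_eq_1 by (intro conjI exI[of _ k]) simp_all
qed

lemma exp_of_complex_shift:
  fixes w :: "'a::comm_cbanach_algebra_1"
  shows "exp (of_complex a * (of_complex l + w)) = of_complex (exp (a * l)) * exp (of_complex a * w)"
proof -
  have "of_complex a * (of_complex l + w) = of_complex (a * l) + of_complex a * w"
    by (simp add: distrib_left of_complex_mult)
  then show ?thesis
    by (simp add: exp_add_commuting[OF mult.commute] exp_of_complex)
qed

lemma cos_shift_eq_imp:
  fixes x y :: "'a::comm_cbanach_algebra_1"
  assumes "cos (of_complex l + x) = cos (of_complex l + y)"
  shows "(exp (of_complex \<i> * x) - exp (of_complex \<i> * y))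
           * (of_complex (exp (2 * \<i> * l)) * exp (of_complex \<i> * (x + y)) - 1) = 0"
proof -
  let ?E = "\<lambda>a w. exp (of_complex a * w) :: 'a"
  define C :: 'a where "C = of_complex (exp (\<i> * l))"
  define C' :: 'a where "C' = of_complex (exp (- \<i> * l))"
  have "2 * cos (of_complex l + x) = 2 * cos (of_complex l + y)"
    using assms by simp
  then have eq: "C * ?E \<i> x + C' * ?E (- \<i>) x = C * ?E \<i> y + C' * ?E (- \<i>) y"
    unfolding cos_conv_exp exp_of_complex_shift C_def C'_def .
  have CC': "C * C' = 1"
    unfolding C_def C'_def by (simp flip: of_complex_mult add: exp_minus_inverse)
  have inverse: "?E \<i> w * ?E (- \<i>) w = 1" for w
    by (simp add: of_complex_minus exp_minus_inverse)
  have "(?E \<i> x - ?E \<i> y) * (C * C * ?E \<i> x * ?E \<i> y - 1) = 0"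
    by (rule sum_reciprocals_eq_imp[OF CC' inverse inverse eq])
  moreover have "C * C = of_complex (exp (2 * \<i> * l))"
    unfolding C_def of_complex_mult[symmetric] exp_add[symmetric] by (simp add: algebra_simps)
  moreover have "?E \<i> x * ?E \<i> y = ?E \<i> (x + y)"
    by (simp add: distrib_left exp_add_commuting[OF mult.commute])
  ultimately show ?thesis
    by (metis mult.assoc)
qed

lemma cos_shift_eq_imp_factor:
  fixes x y :: "'a::comm_cbanach_algebra_1"
  assumes "subgeometric x" "subgeometric y" "cos (of_complex l + x) = cos (of_complex l + y)"
  obtains w where "w dvd 1"
    "(x - y) * w * (of_complex (exp (2 * \<i> * l)) * exp (of_complex \<i> * (x + y)) - 1) = 0"
proof -
  let ?I = "of_complex \<i> :: 'a"
  have "subgeometric (?I * x - ?I * y)"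
    by (intro subgeometric_diff subgeometric_mult_left assms(1,2))
  then obtain g where g: "exp (?I * x) - exp (?I * y) = (?I * x - ?I * y) * g" "g dvd 1"
    by (rule subgeometric_exp_diff)
  have "exp (?I * x) - exp (?I * y) = (x - y) * (?I * g)"
    unfolding g(1) by (simp add: algebra_simps)
  then show thesis
    using cos_shift_eq_imp[OF assms(3)]
    by (intro that[of "?I * g"] unit_mult[OF of_complex_unit g(2)]) simp_all
qed

lemma scaled_exp_minus_one_unit:
  fixes v :: "'a::comm_cbanach_algebra_1"
  assumes "subgeometric v" "d \<noteq> 1"
  shows "of_complex d * exp v - 1 dvd 1"
proof -
  obtain g where g: "exp v - 1 = v * g"
    using subgeometric_exp_minus_one[OF assms(1)] by blast
  have d: "of_complex (d - 1) * of_complex (d / (d - 1)) = (of_complex d :: 'a)"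
    using assms(2) by (simp flip: of_complex_mult)
  have "of_complex (d - 1) * (1 + of_complex (d / (d - 1)) * g * v)
      = of_complex (d - 1) + (of_complex (d - 1) * of_complex (d / (d - 1))) * (g * v :: 'a)"
    by (simp add: distrib_left mult.assoc)
  also have "\<dots> = of_complex d - 1 + of_complex d * (g * v)"
    unfolding d by (simp add: of_complex_diff)
  also have "\<dots> = of_complex d * exp v - 1"
    using g by (simp add: algebra_simps)
  finally have "of_complex d * exp v - 1 = of_complex (d - 1) * (1 + of_complex (d / (d - 1)) * g * v)"
    by (rule sym)
  moreover have "1 + of_complex (d / (d - 1)) * g * v dvd (1 :: 'a)"
    using subgeometric_imp_one_plus_unit[OF subgeometric_mult_left[OF assms(1), of "of_complex (d / (d - 1)) * g"]]
    by simp
  ultimately show ?thesis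
    using assms(2) by (simp add: unit_mult of_complex_unit)
qed

lemma cos_shift_eq_imp_eq:
  fixes x y :: "'a::comm_cbanach_algebra_1"
  assumes "subgeometric x" "subgeometric y" "exp (2 * \<i> * l) \<noteq> 1"
    and "cos (of_complex l + x) = cos (of_complex l + y)"
  shows "x = y"
proof -
  obtain w where w: "w dvd 1"
    "(x - y) * w * (of_complex (exp (2 * \<i> * l)) * exp (of_complex \<i> * (x + y)) - 1) = 0"
    using cos_shift_eq_imp_factor[OF assms(1,2,4)] .
  have "subgeometric (of_complex \<i> * (x + y) :: 'a)"
    by (intro subgeometric_mult_left subgeometric_add assms(1,2))
  then have "of_complex (exp (2 * \<i> * l)) * exp (of_complex \<i> * (x + y)) - 1 dvd (1 :: 'a)"
    using assms(3) by (rule scaled_exp_minus_one_unit)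
  then have "(x - y) * w = 0"
    using w(2) by (simp only: mult_unit_eq_0_iff)
  then show "x = y"
    using w(1) by (simp only: mult_unit_eq_0_iff right_minus_eq)
qed

lemma cos_shift_eq_imp_square_eq:
  fixes x y :: "'a::comm_cbanach_algebra_1"
  assumes "subgeometric x" "subgeometric y" "exp (2 * \<i> * l) = 1"
    and "cos (of_complex l + x) = cos (of_complex l + y)"
  shows "x ^ 2 = y ^ 2"
proof -
  let ?v = "of_complex \<i> * (x + y) :: 'a"
  obtain w where w: "w dvd 1" "(x - y) * w * (of_complex (exp (2 * \<i> * l)) * exp ?v - 1) = 0"
    using cos_shift_eq_imp_factor[OF assms(1,2,4)] .
  have "subgeometric ?v"
    by (intro subgeometric_mult_left subgeometric_add assms(1,2))
  then obtain g where g: "exp ?v - 1 = ?v * g" "g dvd 1"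
    by (rule subgeometric_exp_minus_one)
  have "((x - y) * (x + y)) * (w * of_complex \<i> * g) = 0"
    using w(2) unfolding assms(3) of_complex_1 mult_1_left g(1) by (simp add: ac_simps)
  moreover have "w * of_complex \<i> * g dvd 1"
    using unit_mult[OF unit_mult[OF w(1) of_complex_unit] g(2)] by simp
  ultimately have "(x - y) * (x + y) = 0"
    by (simp only: mult_unit_eq_0_iff)
  moreover have "x ^ 2 - y ^ 2 = (x - y) * (x + y)"
    by (simp add: power2_eq_square algebra_simps)
  ultimately show ?thesis
    by simp
qed

theorem lemma2p2:
  fixes x y :: "'a::comm_cbanach_algebra_1" and l :: complex
  assumes "quasinilpotent x" and "quasinilpotent y"
  shows "((\<nexists>k::int. l = of_int k * complex_of_real pi) \<and>
            cos (scaleC l 1 + x) = cos (scaleC l 1 + y) \<longrightarrow> x = y)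
       \<and> ((\<exists>k::int. l = of_int k * complex_of_real pi) \<and>
            cos (scaleC l 1 + x) = cos (scaleC l 1 + y) \<longrightarrow> x ^ 2 = y ^ 2)"
proof -
  have x: "subgeometric x" and y: "subgeometric y"
    using assms by (simp_all add: quasinilpotent_imp_subgeometric)
  show ?thesis
    unfolding of_complex_def[symmetric] exp_two_i_eq_1_iff[symmetric]
    using cos_shift_eq_imp_eq[OF x y] cos_shift_eq_imp_square_eq[OF x y] by blast
qed

end
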